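(* Let $\mathcal{B}_4$, $\pi_{\lambda,\mu}$ ($\lambda\neq0,\mu\in\mathbb{R}$), the group Fourier transform and the difference operators $\Delta_{x_i}$ be as in the context. Then for a suitable distribution $\kappa$ on $\mathcal{B}_4$ (e.g. $\kappa\in\mathcal{S}(\mathbb{R}^4)$), $$\Delta_{x_3}\hat\kappa(\pi_{\lambda,\mu})=\frac{i}{\lambda}\Big(\Delta_{x_2}\pi_{\lambda,\mu}(\kappa)\,\pi_{\lambda,\mu}(X_3)+\pi_{\lambda,\mu}(\kappa)\pi_{\lambda,\mu}(X_1)-\pi_{\lambda,\mu}(X_1)\pi_{\lambda,\mu}(\kappa)\Big),$$ where $\pi_{\lambda,\mu}(X_1)=\partial_u$, $\pi_{\lambda,\mu}(X_3)$ is multiplication by $-i\lambda u$, and $\Delta_{x_2}\pi_{\lambda,\mu}(\kappa)=\pi_{\lambda,\mu}(x_2\kappa)=\frac{2\lambda}{i}\partial_\mu\pi_{\lambda,\mu}(\kappa)$.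
   Context: The Engel group $\mathcal{B}_4$ is $\mathbb{R}^4$ with the law $(x_1,x_2,x_3,x_4)\circ(y_1,y_2,y_3,y_4)=(x_1+y_1,x_2+y_2,x_3+y_3-x_1y_2,x_4+y_4+\frac12x_1^2y_2-x_1y_3)$ and Haar measure the Lebesgue measure. Its left-invariant vector fields are $X_1=\partial_{x_1}$, $X_2=\partial_{x_2}-x_1\partial_{x_3}+\frac{x_1^2}{2}\partial_{x_4}$, $X_3=\partial_{x_3}-x_1\partial_{x_4}$, $X_4=\partial_{x_4}$. For $\lambda\neq0$, $\mu\in\mathbb{R}$, $\pi_{\lambda,\mu}(x)h(u)=\exp\big(i(-\frac{\mu}{2\lambda}x_2+\lambda x_4-\lambda x_3u+\frac{\lambda}{2}x_2u^2)\big)h(u+x_1)$ on $L^2(\mathbb{R})$. The group Fourier transform is $\hat\kappa(\pi_{\lambda,\mu})=\pi_{\lambda,\mu}(\kappa)=\int_{\mathcal{B}_4}\kappa(x)\pi_{\lambda,\mu}(x)^*dx$; explicitly $\pi_{\lambda,\mu}(\kappa)h(u)=\int_{\mathbb{R}^4}\kappa(x)\exp\big(i(\frac{\mu}{2\lambda}x_2-\lambda x_4+\lambda x_3(u-x_1)-\frac{\lambda}{2}x_2(u-x_1)^2)\big)h(u-x_1)\,dx$. The same symbol $\pi_{\lambda,\mu}$ denotes the infinitesimal representation: $\pi_{\lambda,\mu}(X_1)=\partial_u$, $\pi_{\lambda,\mu}(X_2)=\frac{i}{2}(\lambda u^2-\frac{\mu}{\lambda})$, $\pi_{\lambda,\mu}(X_3)=-i\lambda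 u$, $\pi_{\lambda,\mu}(X_4)=i\lambda$. The difference operators are defined by $\Delta_{x_i}\hat\kappa(\pi_{\lambda,\mu}):=\pi_{\lambda,\mu}(x_i\kappa)$, $i=1,\dots,4$. *)

theory Defs
  imports "HOL-Analysis.Analysis"
begin

definition dir_deriv :: "'a::euclidean_space \<Rightarrow> ('a \<Rightarrow> complex) \<Rightarrow> 'a \<Rightarrow> complex" where
  "dir_deriv b f x = vector_derivative (\<lambda>t::real. f (x + t *\<^sub>R b)) (at 0)"

fun iter_pd :: "'a::euclidean_space list \<Rightarrow> ('a \<Rightarrow> complex) \<Rightarrow> 'a \<Rightarrow> complex" where
  "iter_pd [] f = f"
| "iter_pd (b # bs) f = dir_deriv b (iter_pd bs f)"

definition schwartz :: "('a::euclidean_space \<Rightarrow> complex) \<Rightarrow> bool" where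
  "schwartz f \<longleftrightarrow>
     (\<forall>bs. set bs \<subseteq> Basis \<longrightarrow>
        (\<forall>x. iter_pd bs f differentiable at x) \<and>
        (\<forall>k::nat. bounded (range (\<lambda>x. ((1 + norm x) ^ k) *\<^sub>R iter_pd bs f x))))"

text \<open>Group Fourier transform of \<kappa> at \<pi>_{\<lambda>,\<mu>}, acting on h, evaluated at u
  (the explicit formula of the paper; Haar measure = Lebesgue measure on R^4,
  coordinates x$1,...,x$4).\<close>
definition piK :: "real \<Rightarrow> real \<Rightarrow> (real^4 \<Rightarrow> complex) \<Rightarrow> (real \<Rightarrow> complex) \<Rightarrow> real \<Rightarrow> complex" where
  "piK l m \<kappa> h u =
     (LINT x|lborel. \<kappa> x *
        exp (\<i> * complex_of_real (m / (2 * l) * x$2 - l * x$4 + l * x$3 * (u - x$1)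
                                   - l / 2 * x$2 * (u - x$1)\<^sup>2))
        * h (u - x$1))"

definition piX1 :: "(real \<Rightarrow> complex) \<Rightarrow> real \<Rightarrow> complex" where
  "piX1 h = (\<lambda>u. vector_derivative h (at u))"

definition piX3 :: "real \<Rightarrow> (real \<Rightarrow> complex) \<Rightarrow> real \<Rightarrow> complex" where
  "piX3 l h = (\<lambda>u. - \<i> * complex_of_real l * complex_of_real u * h u)"

definition Delta :: "4 \<Rightarrow> real \<Rightarrow> real \<Rightarrow> (real^4 \<Rightarrow> complex) \<Rightarrow> (real \<Rightarrow> complex) \<Rightarrow> real \<Rightarrow> complex" where
  "Delta i l m \<kappa> = piK l m (\<lambda>x. complex_of_real (x$i) * \<kappa> x)"

end

theory Submission
  imports Defs "HOL-Probability.Sinc_Integral"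
begin

(*
  Both identities come from differentiating the explicit integral for pi(kappa) h (u) under
  the integral sign.  Its phase
    phi = mu x2 / (2 lambda) - lambda x4 + lambda x3 (u - x1) - lambda x2 (u - x1)^2 / 2
  satisfies d phi / d mu = x2 / (2 lambda), which gives Delta_x2 = (2 lambda / i) d/dmu, and
  d phi / du = lambda x3 - lambda x2 (u - x1).  Together with the derivative of h (u - x1) the
  latter gives
    d/du pi(kappa) h = i lambda Delta_x3 h + Delta_x2 (pi(X3) h) + pi(kappa) (pi(X1) h),
  which rearranges to the first identity.  Differentiation under the integral is justified by
  dominated convergence: all integrands are bounded by C (1 + |u|) |kappa x| (1 + |x|)^2, which
  is integrable since kappa is a Schwartz function.
*)

section \<open>Differentiation under the integral sign\<close>

lemma has_vector_derivative_iff_difference_quotient: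
  fixes f :: "real \<Rightarrow> 'b::real_normed_vector"
  shows "(f has_vector_derivative D) (at x within S) \<longleftrightarrow>
    ((\<lambda>y. (f y - f x) /\<^sub>R (y - x)) \<longlongrightarrow> D) (at x within S)"
proof -
  have "norm (f y - f x - (y - x) *\<^sub>R D) / norm (y - x) = norm ((f y - f x) /\<^sub>R (y - x) - D)"
    if "y \<noteq> x" for y
  proof -
    have "(f y - f x) /\<^sub>R (y - x) - D = (f y - f x - (y - x) *\<^sub>R D) /\<^sub>R (y - x)"
      using that by (simp add: scaleR_diff_right)
    then show ?thesis by (simp add: divide_inverse mult.commute)
  qed
  then have "((\<lambda>y. norm (f y - f x - (y - x) *\<^sub>R D) / norm (y - x)) \<longlongrightarrow> 0) (at x within S)
      \<longleftrightarrow> ((\<lambda>y. (f y - f x) /\<^sub>R (y - x) - D) \<longlongrightarrow> 0) (at x within S)"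
    by (subst tendsto_norm_zero_iff[symmetric])
       (intro filterlim_cong refl, auto simp: eventually_at_filter)
  then show ?thesis
    by (simp add: has_vector_derivative_def has_derivative_iff_norm bounded_linear_scaleR_left
        LIM_zero_iff)
qed

lemma has_vector_derivative_bound:
  fixes f :: "real \<Rightarrow> 'b::real_normed_vector"
  assumes "convex S" "a \<in> S" "b \<in> S"
    and "\<And>t. t \<in> S \<Longrightarrow> (f has_vector_derivative f' t) (at t within S)"
    and "\<And>t. t \<in> S \<Longrightarrow> norm (f' t) \<le> B"
  shows "norm (f b - f a) \<le> B * \<bar>b - a\<bar>"
proof -
  have "norm (f b - f a) \<le> B * norm (b - a)"
  proof (rule differentiable_bound[OF \<open>convex S\<close>, of f "\<lambda>t h. h *\<^sub>R f' t"])
    show "(f has_derivative (\<lambda>h. h *\<^sub>R f' t)) (at t within S)" if "t \<in> S" for t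
      using assms(4)[OF that] by (simp add: has_vector_derivative_def)
    show "onorm (\<lambda>h. h *\<^sub>R f' t) \<le> B" if "t \<in> S" for t
      using assms(5)[OF that] onorm_scaleR_left[OF bounded_linear_ident, of "f' t"]
      by (simp add: onorm_id)
  qed (use assms in auto)
  then show ?thesis by simp
qed

lemma integral_dominated_convergence_at:
  fixes s :: "'c::first_countable_topology \<Rightarrow> 'a \<Rightarrow> 'b::{banach, second_countable_topology}"
  assumes "f \<in> borel_measurable M" "\<And>t. s t \<in> borel_measurable M" "integrable M w"
    and lim: "AE x in M. ((\<lambda>t. s t x) \<longlongrightarrow> f x) (at t0 within S)"
    and bound: "\<And>t. t \<in> S \<Longrightarrow> t \<noteq> t0 \<Longrightarrow> AE x in M. norm (s t x) \<le> w x"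
  shows "((\<lambda>t. integral\<^sup>L M (s t)) \<longlongrightarrow> integral\<^sup>L M f) (at t0 within S)"
  unfolding tendsto_at_iff_sequentially comp_def
proof (intro allI impI)
  fix X :: "nat \<Rightarrow> 'c" assume X: "\<forall>n. X n \<in> S - {t0}" "X \<longlonglongrightarrow> t0"
  show "(\<lambda>n. integral\<^sup>L M (s (X n))) \<longlonglongrightarrow> integral\<^sup>L M f"
  proof (rule integral_dominated_convergence[where w = w])
    show "AE x in M. (\<lambda>n. s (X n) x) \<longlonglongrightarrow> f x"
      using lim by eventually_elim (use X in \<open>auto simp: tendsto_at_iff_sequentially comp_def\<close>)
    show "AE x in M. norm (s (X n) x) \<le> w x" for n
      using X(1) bound by auto
  qed (use assms in auto)
qed

lemma has_vector_derivative_integral: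
  fixes f f' :: "real \<Rightarrow> 'a \<Rightarrow> 'b::{banach, second_countable_topology}"
  assumes "r > 0"
    and meas: "\<And>t. f t \<in> borel_measurable M" "f' t0 \<in> borel_measurable M"
    and int: "integrable M (f t0)" "integrable M g"
    and der: "\<And>x t. x \<in> space M \<Longrightarrow> t \<in> ball t0 r \<Longrightarrow>
                ((\<lambda>s. f s x) has_vector_derivative f' t x) (at t)"
    and bound: "\<And>x t. x \<in> space M \<Longrightarrow> t \<in> ball t0 r \<Longrightarrow> norm (f' t x) \<le> g x"
  shows "((\<lambda>t. LINT x|M. f t x) has_vector_derivative (LINT x|M. f' t0 x)) (at t0)"
proof -
  define q where "q t x = (f t x - f t0 x) /\<^sub>R (t - t0)" for t x
  have q_meas: "q t \<in> borel_measurable M" for t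
    unfolding q_def using meas by measurable
  have q_bound: "norm (q t x) \<le> g x" if "x \<in> space M" "t \<in> ball t0 r" "t \<noteq> t0" for x t
  proof -
    have "norm (f t x - f t0 x) \<le> g x * \<bar>t - t0\<bar>"
      by (rule has_vector_derivative_bound[of "ball t0 r"])
         (use that \<open>r > 0\<close> der bound in \<open>auto intro: has_vector_derivative_at_within\<close>)
    then show ?thesis using that by (simp add: q_def divide_simps)
  qed
  have "integrable M (f t)" if "t \<in> ball t0 r" for t
  proof (cases "t = t0")
    case False
    have "integrable M (q t)"
      by (rule Bochner_Integration.integrable_bound[OF int(2) q_meas])
         (use q_bound that False in \<open>auto intro!: AE_I2 intro: order_trans[OF _ abs_ge_self]\<close>)
    moreover have "f t = (\<lambda>x. f t0 x + (t - t0) *\<^sub>R q t x)"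
      using False by (auto simp: q_def)
    ultimately show ?thesis using int(1) by simp
  qed (use int in simp)
  then have quotient_eq: "((LINT x|M. f t x) - (LINT x|M. f t0 x)) /\<^sub>R (t - t0) = (LINT x|M. q t x)"
    if "t \<in> ball t0 r" for t
    using that int(1) by (simp add: q_def)
  have "((\<lambda>t. LINT x|M. q t x) \<longlongrightarrow> (LINT x|M. f' t0 x)) (at t0 within ball t0 r)"
  proof (rule integral_dominated_convergence_at[where w = g])
    show "AE x in M. ((\<lambda>t. q t x) \<longlongrightarrow> f' t0 x) (at t0 within ball t0 r)"
    proof (rule AE_I2)
      fix x assume "x \<in> space M"
      then have "((\<lambda>s. f s x) has_vector_derivative f' t0 x) (at t0)"
        using der \<open>r > 0\<close> by simp
      then show "((\<lambda>t. q t x) \<longlongrightarrow> f' t0 x) (at t0 within ball t0 r)"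
        unfolding has_vector_derivative_iff_difference_quotient q_def
        by (rule tendsto_within_subset) simp
    qed
    show "AE x in M. norm (q t x) \<le> g x" if "t \<in> ball t0 r" "t \<noteq> t0" for t
      using q_bound that by auto
  qed (use meas int q_meas in auto)
  then have "((\<lambda>t. ((LINT x|M. f t x) - (LINT x|M. f t0 x)) /\<^sub>R (t - t0)) \<longlongrightarrow> (LINT x|M. f' t0 x))
      (at t0 within ball t0 r)"
    by (rule Lim_transform_within[OF _ \<open>r > 0\<close>]) (auto simp: quotient_eq)
  moreover have "at t0 within ball t0 r = at t0"
    using \<open>r > 0\<close> by (intro at_within_open) auto
  ultimately show ?thesis
    unfolding has_vector_derivative_iff_difference_quotient by simp
qed

lemma integrable_continuous_dominated:
  fixes f :: "'a::euclidean_space \<Rightarrow> 'b::{banach, second_countable_topology}"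
  assumes "integrable lborel w" "continuous_on UNIV f" "\<And>x. norm (f x) \<le> w x"
  shows "integrable lborel f"
proof (rule Bochner_Integration.integrable_bound[OF assms(1)])
  show "f \<in> borel_measurable lborel"
    using assms(2) by (simp add: borel_measurable_continuous_onI)
  show "AE x in lborel. norm (f x) \<le> norm (w x)"
    using assms(3) by (intro AE_I2) (auto intro: order_trans[OF _ abs_ge_self])
qed

section \<open>Schwartz functions\<close>

lemma iter_pd_append: "iter_pd (bs @ cs) f = iter_pd bs (iter_pd cs f)"
  by (induction bs) auto

lemma schwartz_iter_pd:
  assumes "schwartz f" "set cs \<subseteq> Basis"
  shows "schwartz (iter_pd cs f)"
  using assms unfolding schwartz_def by (simp flip: iter_pd_append)

lemma schwartz_dir_deriv: "schwartz f \<Longrightarrow> b \<in> Basis \<Longrightarrow> schwartz (dir_deriv b f)"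
  using schwartz_iter_pd[of f "[b]"] by simp

lemma schwartz_differentiable: "schwartz f \<Longrightarrow> f differentiable at x"
  unfolding schwartz_def by (metis empty_subsetI iter_pd.simps(1) list.set(1))

lemma schwartz_continuous: "schwartz f \<Longrightarrow> continuous_on UNIV f"
  by (intro continuous_at_imp_continuous_on ballI differentiable_imp_continuous_within
      schwartz_differentiable)

lemma schwartz_decay:
  assumes "schwartz f"
  obtains C where "\<And>x. (1 + norm x) ^ k * norm (f x) \<le> C"
proof -
  have "bounded (range (\<lambda>x. ((1 + norm x) ^ k) *\<^sub>R f x))"
    using assms unfolding schwartz_def by (metis empty_subsetI iter_pd.simps(1) list.set(1))
  then show ?thesis
    using that by (auto simp: bounded_iff)
qed

lemma schwartz_bounded:
  assumes "schwartz f"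
  obtains C where "\<And>x. norm (f x) \<le> C"
  using schwartz_decay[OF assms, of 0] by auto

lemma dir_deriv_one_eq_vector_derivative:
  fixes h :: "real \<Rightarrow> complex"
  assumes "h differentiable at x"
  shows "dir_deriv 1 h x = vector_derivative h (at x)"
proof -
  have "((\<lambda>t. x + t) has_vector_derivative 1) (at 0)"
    using has_vector_derivative_add[OF has_vector_derivative_const has_vector_derivative_id] by simp
  from vector_diff_chain_at[OF this, of h] assms
  have "((\<lambda>t. h (x + t)) has_vector_derivative vector_derivative h (at x)) (at 0)"
    by (simp add: o_def vector_derivative_works)
  then show ?thesis
    unfolding dir_deriv_def using vector_derivative_at by simp
qed

lemma has_vector_derivative_piX1: "schwartz h \<Longrightarrow> (h has_vector_derivative piX1 h x) (at x)"
  unfolding piX1_def by (simp add: schwartz_differentiable flip: vector_derivative_works)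

lemma schwartz_piX1:
  assumes "schwartz h"
  shows "schwartz (piX1 h)"
proof -
  have "piX1 h = dir_deriv 1 h"
    using assms by (auto simp: piX1_def dir_deriv_one_eq_vector_derivative schwartz_differentiable)
  then show ?thesis
    using schwartz_dir_deriv[OF assms, of 1] by simp
qed

lemma integrable_prod_inverse_one_plus_square:
  "integrable lborel (\<lambda>x::'a::euclidean_space. \<Prod>b\<in>Basis. inverse (1 + (x \<bullet> b)^2))"
proof (rule integrableI_nonneg)
  have "integrable lborel (\<lambda>t::real. inverse (1 + t^2))"
    using integrable_inverse_1_plus_square by (simp add: set_integrable_def einterval_def)
  then have finite_1: "(\<integral>\<^sup>+t. ennreal (inverse (1 + t^2)) \<partial>lborel) < \<infinity>"
    by (simp add: integrable_iff_bounded)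
  have "(\<integral>\<^sup>+x. ennreal (\<Prod>b\<in>Basis. inverse (1 + ((x::'a) \<bullet> b)^2)) \<partial>lborel)
      = (\<integral>\<^sup>+x. (\<Prod>b\<in>Basis. (\<lambda>b t. ennreal (inverse (1 + t^2))) b ((x::'a) \<bullet> b)) \<partial>lborel)"
    by (intro nn_integral_cong) (simp add: prod_ennreal)
  also have "\<dots> = (\<Prod>b\<in>(Basis::'a set). (\<integral>\<^sup>+t. ennreal (inverse (1 + t^2)) \<partial>lborel))"
    by (rule nn_integral_lborel_prod) auto
  also have "\<dots> < \<infinity>"
    using finite_1 by (simp add: power_less_top_ennreal)
  finally show "(\<integral>\<^sup>+x. ennreal (\<Prod>b\<in>Basis. inverse (1 + ((x::'a) \<bullet> b)^2)) \<partial>lborel) < \<infinity>" .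
  show "(\<lambda>x::'a. \<Prod>b\<in>Basis. inverse (1 + (x \<bullet> b)^2)) \<in> borel_measurable lborel"
    by measurable
  show "AE x in lborel. 0 \<le> (\<Prod>b\<in>Basis. inverse (1 + ((x::'a) \<bullet> b)^2))"
    by (intro AE_I2 prod_nonneg) (simp add: add_nonneg_nonneg)
qed

lemma prod_one_plus_square_le:
  fixes x :: "'a::euclidean_space"
  shows "(\<Prod>b\<in>Basis. 1 + (x \<bullet> b)^2) \<le> (1 + norm x) ^ (2 * DIM('a))"
proof -
  have "(\<Prod>b\<in>Basis. 1 + (x \<bullet> b)^2) \<le> (\<Prod>b\<in>(Basis::'a set). (1 + norm x)^2)"
  proof (rule prod_mono)
    fix b :: 'a assume "b \<in> Basis"
    then have "(x \<bullet> b)^2 \<le> (norm x)^2"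
      by (metis Basis_le_norm abs_le_square_iff abs_norm_cancel)
    moreover have "(norm x)^2 + 1 \<le> (1 + norm x)^2"
      by (simp add: power2_eq_square algebra_simps)
    ultimately show "0 \<le> 1 + (x \<bullet> b)^2 \<and> 1 + (x \<bullet> b)^2 \<le> (1 + norm x)^2"
      by simp
  qed
  then show ?thesis
    by (simp add: power_mult[symmetric] mult.commute)
qed

lemma integrable_schwartz_weighted:
  fixes f :: "'a::euclidean_space \<Rightarrow> complex"
  assumes "schwartz f"
  shows "integrable lborel (\<lambda>x. norm (f x) * (1 + norm x) ^ k)"
proof -
  define w where "w x = (\<Prod>b\<in>Basis. inverse (1 + (x \<bullet> b)^2))" for x :: 'a
  obtain C where C: "\<And>x. (1 + norm x) ^ (k + 2 * DIM('a)) * norm (f x) \<le> C"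
    using schwartz_decay[OF assms] by blast
  have "norm (f x) * (1 + norm x) ^ k \<le> C * w x" for x
  proof -
    define P where "P = (\<Prod>b\<in>(Basis::'a set). 1 + (x \<bullet> b)^2)"
    have "P > 0"
      unfolding P_def by (intro prod_pos) (simp add: add_pos_nonneg)
    have w: "w x = inverse P"
      unfolding w_def P_def using prod_inversef[of "\<lambda>b. 1 + (x \<bullet> b)^2" Basis] by (simp add: comp_def)
    have "norm (f x) * (1 + norm x) ^ k * P \<le> norm (f x) * (1 + norm x) ^ k * (1 + norm x) ^ (2 * DIM('a))"
      unfolding P_def by (intro mult_left_mono prod_one_plus_square_le) simp
    also have "\<dots> \<le> C"
      using C[of x] by (simp add: power_add mult_ac)
    finally show ?thesis
      using \<open>P > 0\<close> by (simp add: w field_simps)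
  qed
  then have "AE x in lborel. norm (norm (f x) * (1 + norm x) ^ k) \<le> norm (C * w x)"
    by (intro AE_I2) (auto intro: order_trans[OF _ abs_ge_self])
  moreover have "integrable lborel (\<lambda>x. C * w x)"
    unfolding w_def by (intro integrable_mult_right integrable_prod_inverse_one_plus_square)
  moreover have "(\<lambda>x. norm (f x) * (1 + norm x) ^ k) \<in> borel_measurable lborel"
    using borel_measurable_continuous_onI[OF schwartz_continuous[OF assms]] by measurable
  ultimately show ?thesis
    using Bochner_Integration.integrable_bound by blast
qed

section \<open>The Fourier integral on the Engel group\<close>

lemma norm_le_linear_growth:
  assumes "\<And>t. norm (f t) \<le> B"
  shows "norm (f t) \<le> B * (1 + \<bar>t\<bar>)"
proof -
  have "0 \<le> B"
    using order_trans[OF norm_ge_zero assms] .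
  then show ?thesis
    using assms[of t] by (simp add: algebra_simps order_trans[OF _ add_increasing2])
qed

lemma norm_piX3_le:
  assumes "\<And>t. norm (h t) \<le> H"
  shows "norm (piX3 l h t) \<le> \<bar>l\<bar> * H * (1 + \<bar>t\<bar>)"
proof -
  have "norm (piX3 l h t) = \<bar>l\<bar> * (\<bar>t\<bar> * norm (h t))"
    by (simp add: piX3_def norm_mult)
  also have "\<dots> \<le> \<bar>l\<bar> * ((1 + \<bar>t\<bar>) * H)"
    by (intro mult_left_mono mult_mono assms) auto
  finally show ?thesis
    by (simp add: mult_ac)
qed

lemma continuous_on_piX3: "continuous_on UNIV h \<Longrightarrow> continuous_on UNIV (piX3 l h)"
  unfolding piX3_def by (intro continuous_intros)

definition fourier_phase :: "real \<Rightarrow> real \<Rightarrow> real \<Rightarrow> real^4 \<Rightarrow> real" where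
  "fourier_phase l m u x =
     m / (2 * l) * x$2 - l * x$4 + l * x$3 * (u - x$1) - l / 2 * x$2 * (u - x$1)\<^sup>2"

definition fourier_integrand ::
    "real \<Rightarrow> real \<Rightarrow> (real^4 \<Rightarrow> complex) \<Rightarrow> (real \<Rightarrow> complex) \<Rightarrow> real \<Rightarrow> real^4 \<Rightarrow> complex" where
  "fourier_integrand l m \<kappa> h u x = \<kappa> x * exp (\<i> * of_real (fourier_phase l m u x)) * h (u - x$1)"

lemma piK_eq_integral: "piK l m \<kappa> h u = (LINT x|lborel. fourier_integrand l m \<kappa> h u x)"
  unfolding piK_def fourier_integrand_def fourier_phase_def ..

lemma Delta_eq_integral:
  "Delta i l m \<kappa> h u = (LINT x|lborel. of_real (x$i) * fourier_integrand l m \<kappa> h u x)"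
  unfolding Delta_def piK_eq_integral fourier_integrand_def by (simp add: mult.assoc)

lemma continuous_on_fourier_integrand:
  assumes "continuous_on UNIV \<kappa>" "continuous_on UNIV h"
  shows "continuous_on UNIV (fourier_integrand l m \<kappa> h u)"
proof -
  have "continuous_on UNIV (\<lambda>x::real^4. h (u - x$1))"
    by (rule continuous_on_compose2[OF assms(2)]) (auto intro!: continuous_intros)
  then show ?thesis
    unfolding fourier_integrand_def fourier_phase_def by (intro continuous_intros assms)
qed

lemma norm_fourier_integrand_le:
  assumes growth: "\<And>t. norm (h t) \<le> C * (1 + \<bar>t\<bar>)"
  shows "norm (fourier_integrand l m \<kappa> h u x) \<le> C * (1 + \<bar>u\<bar>) * (norm (\<kappa> x) * (1 + norm x)\<^sup>2)"
    and "norm (of_real (x$i) * fourier_integrand l m \<kappa> h u x)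
           \<le> C * (1 + \<bar>u\<bar>) * (norm (\<kappa> x) * (1 + norm x)\<^sup>2)"
proof -
  have "C \<ge> 0"
    using order_trans[OF norm_ge_zero growth[of 0]] by simp
  have "\<bar>x$1\<bar> \<le> norm x" "\<bar>x$i\<bar> \<le> norm x"
    by (rule component_le_norm_cart)+
  then have "1 + \<bar>u - x$1\<bar> \<le> (1 + \<bar>u\<bar>) * (1 + norm x)"
    by (simp add: algebra_simps) (smt (verit) mult_nonneg_nonneg abs_ge_zero norm_ge_zero)
  then have h_bound: "norm (h (u - x$1)) \<le> C * (1 + \<bar>u\<bar>) * (1 + norm x)"
    using growth[of "u - x$1"] \<open>C \<ge> 0\<close> by (smt (verit) mult.assoc mult_left_mono)
  have "norm (fourier_integrand l m \<kappa> h u x) * (1 + norm x)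
      = norm (\<kappa> x) * norm (h (u - x$1)) * (1 + norm x)"
    by (simp add: fourier_integrand_def norm_mult norm_exp_eq_Re)
  also have "\<dots> \<le> norm (\<kappa> x) * (C * (1 + \<bar>u\<bar>) * (1 + norm x)) * (1 + norm x)"
    by (intro mult_right_mono mult_left_mono h_bound) simp_all
  also have "\<dots> = C * (1 + \<bar>u\<bar>) * (norm (\<kappa> x) * (1 + norm x)\<^sup>2)"
    by (simp add: power2_eq_square mult_ac)
  finally have bound: "norm (fourier_integrand l m \<kappa> h u x) * (1 + norm x)
      \<le> C * (1 + \<bar>u\<bar>) * (norm (\<kappa> x) * (1 + norm x)\<^sup>2)" .
  show "norm (fourier_integrand l m \<kappa> h u x) \<le> C * (1 + \<bar>u\<bar>) * (norm (\<kappa> x) * (1 + norm x)\<^sup>2)"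
    using mult_left_mono[of 1 "1 + norm x" "norm (fourier_integrand l m \<kappa> h u x)"] bound by simp
  show "norm (of_real (x$i) * fourier_integrand l m \<kappa> h u x)
      \<le> C * (1 + \<bar>u\<bar>) * (norm (\<kappa> x) * (1 + norm x)\<^sup>2)"
    using mult_right_mono[of "\<bar>x$i\<bar>" "1 + norm x" "norm (fourier_integrand l m \<kappa> h u x)"]
      \<open>\<bar>x$i\<bar> \<le> norm x\<close> bound
    by (simp add: norm_mult mult.commute)
qed

lemma integrable_fourier_integrand:
  assumes "schwartz \<kappa>" "continuous_on UNIV h" "\<And>t. norm (h t) \<le> C * (1 + \<bar>t\<bar>)"
  shows "integrable lborel (fourier_integrand l m \<kappa> h u)"
    and "integrable lborel (\<lambda>x. of_real (x$i) * fourier_integrand l m \<kappa> h u x)"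
proof -
  have W: "integrable lborel (\<lambda>x. C * (1 + \<bar>u\<bar>) * (norm (\<kappa> x) * (1 + norm x)\<^sup>2))"
    using integrable_schwartz_weighted[OF assms(1)] by simp
  have cont: "continuous_on UNIV (fourier_integrand l m \<kappa> h u)"
    by (intro continuous_on_fourier_integrand schwartz_continuous assms)
  show "integrable lborel (fourier_integrand l m \<kappa> h u)"
    using W cont norm_fourier_integrand_le(1)[OF assms(3)] by (rule integrable_continuous_dominated)
  show "integrable lborel (\<lambda>x. of_real (x$i) * fourier_integrand l m \<kappa> h u x)"
    using W _ norm_fourier_integrand_le(2)[OF assms(3)]
    by (rule integrable_continuous_dominated) (intro continuous_intros cont)
qed

lemma has_vector_derivative_exp_i_times:
  assumes "(g has_real_derivative g') (at t)"
  shows "((\<lambda>s. exp (\<i> * of_real (g s))) has_vector_derivative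
           exp (\<i> * of_real (g t)) * (\<i> * of_real g')) (at t)"
proof -
  have "((\<lambda>s. \<i> * of_real (g s)) has_vector_derivative \<i> * of_real g') (at t)"
    by (rule has_vector_derivative_mult_right[OF has_vector_derivative_of_real[OF assms]])
  from field_vector_diff_chain_at[OF this DERIV_exp]
  show ?thesis by (simp add: o_def mult.commute)
qed

lemma fourier_integrand_has_vector_derivative_mu:
  "((\<lambda>m. fourier_integrand l m \<kappa> h u x) has_vector_derivative
      \<i> / (2 * of_real l) * (of_real (x$2) * fourier_integrand l m \<kappa> h u x)) (at m)"
proof -
  have "((\<lambda>m. fourier_phase l m u x) has_real_derivative x$2 / (2 * l)) (at m)"
    unfolding fourier_phase_def divide_inverse by (auto intro!: derivative_eq_intros)
  from has_vector_derivative_exp_i_times[OF this]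
  have "((\<lambda>m. fourier_integrand l m \<kappa> h u x) has_vector_derivative
      \<kappa> x * (exp (\<i> * of_real (fourier_phase l m u x)) * (\<i> * of_real (x$2 / (2 * l)))) * h (u - x$1))
      (at m)"
    unfolding fourier_integrand_def
    by (intro has_vector_derivative_mult_left has_vector_derivative_mult_right)
  then show ?thesis
    by (simp add: fourier_integrand_def mult_ac)
qed

lemma fourier_integrand_has_vector_derivative_u:
  assumes "\<And>t. (h has_vector_derivative h' t) (at t)"
  shows "((\<lambda>u. fourier_integrand l m \<kappa> h u x) has_vector_derivative
      \<i> * of_real l * (of_real (x$3) * fourier_integrand l m \<kappa> h u x)
      + of_real (x$2) * fourier_integrand l m \<kappa> (piX3 l h) u x
      + fourier_integrand l m \<kappa> h' u x) (at u)"
proof -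
  define E where "E u = exp (\<i> * of_real (fourier_phase l m u x))" for u
  have "((\<lambda>u. fourier_phase l m u x) has_real_derivative l * x$3 - l * x$2 * (u - x$1)) (at u)"
    unfolding fourier_phase_def by (auto intro!: derivative_eq_intros simp: field_simps)
  from has_vector_derivative_exp_i_times[OF this]
  have dE: "(E has_vector_derivative E u * (\<i> * of_real (l * x$3 - l * x$2 * (u - x$1)))) (at u)"
    unfolding E_def .
  have "((\<lambda>u. u - x$1) has_vector_derivative 1) (at u)"
    using has_vector_derivative_diff[OF has_vector_derivative_id has_vector_derivative_const] by simp
  from vector_diff_chain_at[OF this assms]
  have dh: "((\<lambda>u. h (u - x$1)) has_vector_derivative h' (u - x$1)) (at u)"
    by (simp add: o_def)
  have "((\<lambda>u. \<kappa> x * E u * h (u - x$1)) has_vector_derivative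
      \<kappa> x * E u * h' (u - x$1) + \<kappa> x * (E u * (\<i> * of_real (l * x$3 - l * x$2 * (u - x$1)))) * h (u - x$1))
      (at u)"
    by (rule has_vector_derivative_mult[OF has_vector_derivative_mult_right[OF dE] dh])
  then show ?thesis
    by (simp add: fourier_integrand_def E_def piX3_def algebra_simps)
qed

lemma norm_fourier_integrand_derivative_u_le:
  assumes H: "\<And>t. norm (h t) \<le> H" and H': "\<And>t. norm (h' t) \<le> H'"
  shows "norm (\<i> * of_real l * (of_real (x$3) * fourier_integrand l m \<kappa> h u x)
           + of_real (x$2) * fourier_integrand l m \<kappa> (piX3 l h) u x
           + fourier_integrand l m \<kappa> h' u x)
         \<le> (2 * \<bar>l\<bar> * H + H') * (1 + \<bar>u\<bar>) * (norm (\<kappa> x) * (1 + norm x)\<^sup>2)"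
proof -
  define W where "W = norm (\<kappa> x) * (1 + norm x)\<^sup>2"
  have "norm (of_real (x$3) * fourier_integrand l m \<kappa> h u x) \<le> H * (1 + \<bar>u\<bar>) * W"
    unfolding W_def by (rule norm_fourier_integrand_le(2)[OF norm_le_linear_growth[OF H]])
  then have "norm (\<i> * of_real l * (of_real (x$3) * fourier_integrand l m \<kappa> h u x))
      \<le> \<bar>l\<bar> * (H * (1 + \<bar>u\<bar>) * W)"
    using mult_left_mono[OF _ abs_ge_zero[of l]] by (simp add: norm_mult)
  then have "norm (\<i> * of_real l * (of_real (x$3) * fourier_integrand l m \<kappa> h u x)
           + of_real (x$2) * fourier_integrand l m \<kappa> (piX3 l h) u x
           + fourier_integrand l m \<kappa> h' u x)
      \<le> \<bar>l\<bar> * (H * (1 + \<bar>u\<bar>) * W) + \<bar>l\<bar> * H * (1 + \<bar>u\<bar>) * W + H' * (1 + \<bar>u\<bar>) * W"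
    unfolding W_def
    by (intro norm_triangle_le add_mono norm_fourier_integrand_le norm_le_linear_growth
        norm_piX3_le H H')
  also have "\<dots> = (2 * \<bar>l\<bar> * H + H') * (1 + \<bar>u\<bar>) * W"
    by (simp add: algebra_simps)
  finally show ?thesis
    unfolding W_def .
qed

lemma piK_has_vector_derivative_mu:
  assumes "schwartz \<kappa>" "schwartz h"
  shows "((\<lambda>m. piK l m \<kappa> h u) has_vector_derivative \<i> / (2 * of_real l) * Delta 2 l m \<kappa> h u) (at m)"
proof -
  obtain H where "\<And>t. norm (h t) \<le> H"
    using schwartz_bounded[OF assms(2)] by blast
  then have growth: "norm (h t) \<le> H * (1 + \<bar>t\<bar>)" for t
    by (rule norm_le_linear_growth)
  note integrable = integrable_fourier_integrand[OF assms(1) schwartz_continuous[OF assms(2)] growth]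
  have "((\<lambda>m. LINT x|lborel. fourier_integrand l m \<kappa> h u x) has_vector_derivative
      (LINT x|lborel. \<i> / (2 * of_real l) * (of_real (x$2) * fourier_integrand l m \<kappa> h u x))) (at m)"
  proof (rule has_vector_derivative_integral[where r = 1 and
        g = "\<lambda>x. norm (\<i> / (2 * of_real l)) * (H * (1 + \<bar>u\<bar>) * (norm (\<kappa> x) * (1 + norm x)\<^sup>2))"])
    show "fourier_integrand l t \<kappa> h u \<in> borel_measurable lborel" for t
      using integrable(1) by (rule borel_measurable_integrable)
    show "(\<lambda>x. \<i> / (2 * of_real l) * (of_real (x$2) * fourier_integrand l m \<kappa> h u x))
        \<in> borel_measurable lborel"
      using integrable_mult_right[OF integrable(2)] by (rule borel_measurable_integrable)
    show "integrable lborel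
        (\<lambda>x. norm (\<i> / (2 * of_real l)) * (H * (1 + \<bar>u\<bar>) * (norm (\<kappa> x) * (1 + norm x)\<^sup>2)))"
      using integrable_schwartz_weighted[OF assms(1), of 2] by simp
    show "norm (\<i> / (2 * of_real l) * (of_real (x$2) * fourier_integrand l t \<kappa> h u x))
        \<le> norm (\<i> / (2 * of_real l)) * (H * (1 + \<bar>u\<bar>) * (norm (\<kappa> x) * (1 + norm x)\<^sup>2))" for x t
      unfolding norm_mult[of "\<i> / (2 * of_real l)"]
      by (intro mult_left_mono norm_fourier_integrand_le(2) growth) simp
  qed (use integrable fourier_integrand_has_vector_derivative_mu in auto)
  then show ?thesis
    by (simp add: piK_eq_integral Delta_eq_integral)
qed

lemma piK_has_vector_derivative_u:
  assumes "schwartz \<kappa>" "schwartz h"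
  shows "(piK l m \<kappa> h has_vector_derivative
      \<i> * of_real l * Delta 3 l m \<kappa> h u + Delta 2 l m \<kappa> (piX3 l h) u + piK l m \<kappa> (piX1 h) u) (at u)"
proof -
  obtain H where H: "\<And>t. norm (h t) \<le> H"
    using schwartz_bounded[OF assms(2)] by blast
  obtain H' where H': "\<And>t. norm (piX1 h t) \<le> H'"
    using schwartz_bounded[OF schwartz_piX1[OF assms(2)]] by blast
  have "0 \<le> 2 * \<bar>l\<bar> * H + H'"
    using order_trans[OF norm_ge_zero H] order_trans[OF norm_ge_zero H'] by simp
  have h_cont: "continuous_on UNIV h"
    using assms(2) by (rule schwartz_continuous)
  have growth: "norm (h t) \<le> H * (1 + \<bar>t\<bar>)" and growth': "norm (piX1 h t) \<le> H' * (1 + \<bar>t\<bar>)"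
    and growth3: "norm (piX3 l h t) \<le> \<bar>l\<bar> * H * (1 + \<bar>t\<bar>)" for t
    by (intro norm_le_linear_growth norm_piX3_le H H')+
  note integrable = integrable_fourier_integrand[OF assms(1) h_cont growth]
  note integrable3 = integrable_fourier_integrand[OF assms(1) continuous_on_piX3[OF h_cont] growth3]
  note integrable1 = integrable_fourier_integrand[OF assms(1)
      schwartz_continuous[OF schwartz_piX1[OF assms(2)]] growth']
  define D where "D t x = \<i> * of_real l * (of_real (x$3) * fourier_integrand l m \<kappa> h t x)
      + of_real (x$2) * fourier_integrand l m \<kappa> (piX3 l h) t x
      + fourier_integrand l m \<kappa> (piX1 h) t x" for t x
  have "((\<lambda>t. LINT x|lborel. fourier_integrand l m \<kappa> h t x) has_vector_derivative
      (LINT x|lborel. D u x)) (at u)"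
  proof (rule has_vector_derivative_integral[where r = 1 and
        g = "\<lambda>x. (2 * \<bar>l\<bar> * H + H') * (2 + \<bar>u\<bar>) * (norm (\<kappa> x) * (1 + norm x)\<^sup>2)"])
    show "fourier_integrand l m \<kappa> h t \<in> borel_measurable lborel" for t
      using integrable(1) by (rule borel_measurable_integrable)
    show "D u \<in> borel_measurable lborel"
      unfolding D_def using integrable(2) integrable3(2) integrable1(1)
      by (intro borel_measurable_add borel_measurable_times borel_measurable_const
          borel_measurable_integrable)
    show "integrable lborel
        (\<lambda>x. (2 * \<bar>l\<bar> * H + H') * (2 + \<bar>u\<bar>) * (norm (\<kappa> x) * (1 + norm x)\<^sup>2))"
      using integrable_schwartz_weighted[OF assms(1), of 2] by simp
    show "((\<lambda>s. fourier_integrand l m \<kappa> h s x) has_vector_derivative D t x) (at t)" for x t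
      unfolding D_def
      by (rule fourier_integrand_has_vector_derivative_u) (rule has_vector_derivative_piX1[OF assms(2)])
    show "norm (D t x) \<le> (2 * \<bar>l\<bar> * H + H') * (2 + \<bar>u\<bar>) * (norm (\<kappa> x) * (1 + norm x)\<^sup>2)"
      if "t \<in> ball u 1" for t x
    proof -
      have "norm (D t x) \<le> (2 * \<bar>l\<bar> * H + H') * (1 + \<bar>t\<bar>) * (norm (\<kappa> x) * (1 + norm x)\<^sup>2)"
        unfolding D_def by (rule norm_fourier_integrand_derivative_u_le[OF H H'])
      also have "\<dots> \<le> (2 * \<bar>l\<bar> * H + H') * (2 + \<bar>u\<bar>) * (norm (\<kappa> x) * (1 + norm x)\<^sup>2)"
        using that \<open>0 \<le> 2 * \<bar>l\<bar> * H + H'\<close>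
        by (intro mult_right_mono mult_left_mono) (auto simp: dist_real_def)
      finally show ?thesis .
    qed
  qed (use integrable in auto)
  moreover have "(LINT x|lborel. D u x)
      = \<i> * of_real l * Delta 3 l m \<kappa> h u + Delta 2 l m \<kappa> (piX3 l h) u + piK l m \<kappa> (piX1 h) u"
    unfolding D_def Delta_eq_integral piK_eq_integral
    using integrable(2) integrable3(2) integrable1(1) by simp
  ultimately show ?thesis
    by (simp add: piK_eq_integral[abs_def])
qed

theorem mainTheorem3:
  fixes l m :: real and \<kappa> :: "real^4 \<Rightarrow> complex" and h :: "real \<Rightarrow> complex" and u :: real
  assumes "l \<noteq> 0" and "schwartz \<kappa>" and "schwartz h"
  shows "Delta 3 l m \<kappa> h u =
           (\<i> / complex_of_real l) *
             (Delta 2 l m \<kappa> (piX3 l h) u + piK l m \<kappa> (piX1 h) u - piX1 (piK l m \<kappa> h) u)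
       \<and> Delta 2 l m \<kappa> h u =
           (2 * complex_of_real l / \<i>) * vector_derivative (\<lambda>m'. piK l m' \<kappa> h u) (at m)"
proof -
  have "piX1 (piK l m \<kappa> h) u = vector_derivative (piK l m \<kappa> h) (at u)"
    by (simp add: piX1_def)
  also have "\<dots> = \<i> * of_real l * Delta 3 l m \<kappa> h u + Delta 2 l m \<kappa> (piX3 l h) u + piK l m \<kappa> (piX1 h) u"
    using piK_has_vector_derivative_u[OF assms(2,3)] by (rule vector_derivative_at)
  moreover have "vector_derivative (\<lambda>m'. piK l m' \<kappa> h u) (at m) = \<i> / (2 * of_real l) * Delta 2 l m \<kappa> h u"
    using piK_has_vector_derivative_mu[OF assms(2,3)] by (rule vector_derivative_at)
  ultimately show ?thesis
    using assms(1) by (simp add: field_simps)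
qed

end
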